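(* In the setting of the context, for every integer $m\ge 0$, \[ \mathbb{E}\big[M_m(A,N)^2\big]-\big(\mathbb{E}[M_m(A,N)]\big)^2 \;=\; O_m\!\left(\frac1N\right)\qquad(N\to\infty), \] in particular the variance of $M_m(A,N)$ tends to $0$ as $N\to\infty$.
   Context: Let $p$ be a probability density on $\mathbb{R}$ with mean $0$, variance $1$ and finite moments of all orders. For $N\ge 1$, let $b_1,\dots,b_{N-1}$ be independent random variables with density $p$, set $b_0=0$, and let $A=A_N$ be the $N\times N$ real symmetric Toeplitz matrix with entries $a_{ij}=b_{|i-j|}$ ($1\le i,j\le N$). Let $\lambda_1(A),\dots,\lambda_N(A)$ be its eigenvalues. For an integer $k\ge 0$ define $M_k(A,N)=N^{-(k/2+1)}\sum_{i=1}^N\lambda_i(A)^k = N^{-(k/2+1)}\,\mathrm{Trace}(A^k)$, and $M_k(N)=\mathbb{E}[M_k(A,N)]$, the expectation over the random entries. *)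

theory Defs
  imports "HOL-Probability.Probability" "Jordan_Normal_Form.Matrix" "HOL-Library.Landau_Symbols"
begin

definition entry_dist :: "(real \<Rightarrow> real) \<Rightarrow> real measure" where
  "entry_dist p = density lborel (\<lambda>x. ennreal (p x))"

definition entries_space :: "(real \<Rightarrow> real) \<Rightarrow> nat \<Rightarrow> (nat \<Rightarrow> real) measure" where
  "entries_space p N = PiM {1..<N} (\<lambda>_. entry_dist p)"

text \<open>The N x N real symmetric Toeplitz matrix a_ij = b_|i-j| with b_0 = 0
  (indices 0..N-1 here; |i-j| is unaffected by the shift).\<close>
definition toeplitz_mat :: "nat \<Rightarrow> (nat \<Rightarrow> real) \<Rightarrow> real mat" where
  "toeplitz_mat N b = Matrix.mat N N
     (\<lambda>(i, j). let d = (if i \<le> j then j - i else i - j) in if d = 0 then 0 else b d)"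

definition mat_trace :: "real mat \<Rightarrow> real" where
  "mat_trace A = (\<Sum>i<dim_row A. A $$ (i, i))"

definition moment_AN :: "nat \<Rightarrow> nat \<Rightarrow> (nat \<Rightarrow> real) \<Rightarrow> real" where
  "moment_AN k N b = mat_trace (toeplitz_mat N b ^\<^sub>m k) / real N powr (real k / 2 + 1)"

definition expect_entries :: "(real \<Rightarrow> real) \<Rightarrow> nat \<Rightarrow> ((nat \<Rightarrow> real) \<Rightarrow> real) \<Rightarrow> real" where
  "expect_entries p N f = integral\<^sup>L (entries_space p N) f"

end

theory Submission
  imports Defs
begin

(* Expanding the trace, Tr(A^m) is the sum over closed walks u of length m on {0..N-1} of the
  weights prod_t b_|u_t - u_(t+1)|, so the variance of Tr(A^m) is the sum over pairs of walks (u, v)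
  of the covariances of their weights. As the entries are independent and centred, such a
  covariance vanishes unless every step length occurs at least twice in u and v together and some
  length occurs in both ("matched" pairs), and all covariances are bounded in terms of the first
  2m moments. After rotating both walks so that a shared length is their closing step, a matched
  pair is determined by its two starting points, the endpoints of its at most m - 1 steps of a
  length not seen before, and combinatorial data bounded in terms of m, because every other step
  repeats the length of an earlier one. So there are O(N^(m+1)) matched pairs, and the
  normalisation by N^(m+2) leaves O(1/N). *)

lemma add_mod_inj_on: "inj_on (\<lambda>t. (t + a) mod m) {..<(m::nat)}"
proof -
  have "x = y" if "x < m" "y < m" "(x + a) mod m = (y + a) mod m" "y \<le> x" for x y
  proof -
    have "m dvd x - y"
      using mod_eq_dvd_iff_nat[of "y + a" "x + a" m] that by simp
    show ?thesis
    proof (rule ccontr)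
      assume "x \<noteq> y"
      with \<open>m dvd x - y\<close> have "m \<le> x - y"
        using that by (intro dvd_imp_le) auto
      then show False
        using that by linarith
    qed
  qed
  then show ?thesis
    unfolding inj_on_def by (metis lessThan_iff nle_le)
qed

lemma bij_betw_add_mod:
  assumes "0 < (m::nat)"
  shows "bij_betw (\<lambda>t. (t + a) mod m) {..<m} {..<m}"
proof -
  have "(\<lambda>t. (t + a) mod m) ` {..<m} \<subseteq> {..<m}"
    using assms by auto
  then show ?thesis
    unfolding bij_betw_def by (simp add: add_mod_inj_on endo_inj_surj)
qed

lemma card_Collect_bij_betw:
  assumes "bij_betw f A B"
  shows "card {x \<in> A. P (f x)} = card {y \<in> B. P y}"
proof -
  have "f ` {x \<in> A. P (f x)} = {y \<in> B. P y}"
    using assms unfolding bij_betw_def by blast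
  moreover have "inj_on f {x \<in> A. P (f x)}"
    using bij_betw_imp_inj_on[OF assms] by (rule inj_on_subset) auto
  ultimately show ?thesis
    using card_image[of f "{x \<in> A. P (f x)}"] by simp
qed

lemma prod_eq_prod_power_card:
  fixes f :: "'b \<Rightarrow> 'c::comm_monoid_mult"
  assumes "finite A" "finite T" "g ` A \<subseteq> T"
  shows "(\<Prod>a\<in>A. f (g a)) = (\<Prod>y\<in>T. f y ^ card {a \<in> A. g a = y})"
  using prod.group[OF assms, of "\<lambda>a. f (g a)"] by simp

lemma sum_card_fibres:
  assumes "finite A" "finite T" "g ` A \<subseteq> T"
  shows "(\<Sum>y\<in>T. card {a \<in> A. g a = y}) = card A"
  using sum.group[OF assms, of "\<lambda>_. 1::nat"] by simp

lemma card_image_le_half: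
  assumes "finite S" and "\<And>y. y \<in> f ` S \<Longrightarrow> y \<noteq> y0 \<Longrightarrow> 2 \<le> card {x \<in> S. f x = y}"
  shows "2 * card (f ` S) \<le> Suc (card S)"
proof -
  have fibre: "2 \<le> card {x \<in> S. f x = y} + (if y = y0 then 1 else 0)" if "y \<in> f ` S" for y
  proof (cases "y = y0")
    case True
    have "{x \<in> S. f x = y} \<noteq> {}"
      using that by auto
    then show ?thesis
      using True \<open>finite S\<close> by (simp add: Suc_le_eq card_gt_0_iff)
  qed (use assms that in auto)
  have "2 * card (f ` S) = (\<Sum>y\<in>f ` S. 2)"
    by simp
  also have "\<dots> \<le> (\<Sum>y\<in>f ` S. card {x \<in> S. f x = y}) + (\<Sum>y\<in>f ` S. if y = y0 then 1 else 0)"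
    unfolding sum.distrib[symmetric] by (rule sum_mono) (rule fibre)
  also have "(\<Sum>y\<in>f ` S. card {x \<in> S. f x = y}) = card S"
    by (rule sum_card_fibres) (use assms in auto)
  also have "(\<Sum>y\<in>f ` S. if y = y0 then 1 else 0) \<le> (1::nat)"
    using assms by (simp add: sum.delta)
  finally show ?thesis
    by simp
qed

lemma card_le_card_image_of_distinct_values:
  fixes f :: "'a::linorder \<Rightarrow> 'b"
  assumes "finite S" "F \<subseteq> S" and "\<And>s t. s \<in> F \<Longrightarrow> t \<in> F \<Longrightarrow> s < t \<Longrightarrow> f s \<noteq> f t"
  shows "card F \<le> card (f ` S)"
proof -
  have "inj_on f F"
    by (rule inj_onI) (metis assms(3) linorder_neqE)
  then have "card F = card (f ` F)"
    by (simp add: card_image)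
  also have "\<dots> \<le> card (f ` S)"
    using assms by (intro card_mono) auto
  finally show ?thesis .
qed

lemma abs_power_le_one_plus_even_power:
  fixes x :: real
  assumes "k \<le> 2 * n"
  shows "\<bar>x ^ k\<bar> \<le> 1 + x ^ (2 * n)"
proof (cases "\<bar>x\<bar> \<le> 1")
  case True
  then have "\<bar>x ^ k\<bar> \<le> 1"
    by (simp add: power_abs power_le_one)
  moreover have "0 \<le> x ^ (2 * n)"
    by (simp add: power_mult)
  ultimately show ?thesis
    by linarith
next
  case False
  then have "\<bar>x\<bar> ^ k \<le> \<bar>x\<bar> ^ (2 * n)"
    using assms by (intro power_increasing) auto
  then show ?thesis
    by (simp add: power_abs power_mult)
qed

section \<open>Closed walks\<close>

definition gap :: "nat \<Rightarrow> nat \<Rightarrow> nat" where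
  "gap i j = (if i \<le> j then j - i else i - j)"

lemma gap_less: "i < N \<Longrightarrow> j < N \<Longrightarrow> gap i j < N"
  unfolding gap_def by (simp add: less_imp_diff_less)

definition toeplitz_coeff :: "(nat \<Rightarrow> real) \<Rightarrow> nat \<Rightarrow> real" where
  "toeplitz_coeff b d = (if d = 0 then 0 else b d)"

lemma toeplitz_mat_carrier: "toeplitz_mat N b \<in> carrier_mat N N"
  by (simp add: toeplitz_mat_def)

lemma toeplitz_mat_entry:
  "i < N \<Longrightarrow> j < N \<Longrightarrow> toeplitz_mat N b $$ (i, j) = toeplitz_coeff b (gap i j)"
  by (simp add: toeplitz_mat_def toeplitz_coeff_def gap_def Let_def)

lemma mat_power_entry_eq_sum_paths:
  fixes A :: "'a :: comm_semiring_1 mat"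
  assumes A: "A \<in> carrier_mat n n" and i: "i < n" and j: "j < n"
  shows "(A ^\<^sub>m k) $$ (i, j) =
    (\<Sum>p\<in>{p \<in> {..k} \<rightarrow>\<^sub>E {..<n}. p 0 = i \<and> p k = j}. \<Prod>t<k. A $$ (p t, p (Suc t)))"
  using j
proof (induction k arbitrary: j)
  case 0
  have "{p \<in> {..0} \<rightarrow>\<^sub>E {..<n}. p 0 = i \<and> p 0 = j} = (if i = j then {\<lambda>t\<in>{..0::nat}. i} else {})"
    using i by (auto simp: PiE_def extensional_def fun_eq_iff)
  then show ?case
    using A i 0 by simp
next
  case (Suc k)
  let ?P = "\<lambda>k j. {p \<in> {..k} \<rightarrow>\<^sub>E {..<n}. p 0 = i \<and> p k = j}"
  have "(A ^\<^sub>m Suc k) $$ (i, j) = (\<Sum>l<n. (A ^\<^sub>m k) $$ (i, l) * A $$ (l, j))"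
    using A i Suc.prems by (simp add: scalar_prod_def lessThan_atLeast0)
  also have "\<dots> = (\<Sum>(l, p)\<in>Sigma {..<n} (?P k). (\<Prod>t<k. A $$ (p t, p (Suc t))) * A $$ (l, j))"
    using Suc.IH by (simp add: sum_distrib_right sum.Sigma finite_PiE)
  also have "\<dots> = (\<Sum>q\<in>?P (Suc k) j. \<Prod>t<Suc k. A $$ (q t, q (Suc t)))"
  proof (rule sum.reindex_bij_witness[of _ "\<lambda>q. (q k, restrict q {..k})" "\<lambda>(l, p). p(Suc k := j)"])
    fix lp assume "lp \<in> Sigma {..<n} (?P k)"
    then obtain l p where lp: "lp = (l, p)" "l < n" "p \<in> {..k} \<rightarrow>\<^sub>E {..<n}" "p 0 = i" "p k = l"
      by auto
    then show "(case lp of (l, p) \<Rightarrow> p(Suc k := j)) \<in> ?P (Suc k) j"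
      using Suc.prems by (auto simp: PiE_def extensional_def Pi_def)
    show "(\<lambda>q. (q k, restrict q {..k})) (case lp of (l, p) \<Rightarrow> p(Suc k := j)) = lp"
      using lp by (auto simp: fun_eq_iff PiE_def extensional_def)
    have "(\<Prod>t<Suc k. A $$ ((p(Suc k := j)) t, (p(Suc k := j)) (Suc t)))
        = (\<Prod>t<k. A $$ (p t, p (Suc t))) * A $$ (l, j)"
      using lp by (simp add: prod.lessThan_Suc)
    then show "(\<Prod>t<Suc k. A $$ ((case lp of (l, p) \<Rightarrow> p(Suc k := j)) t,
          (case lp of (l, p) \<Rightarrow> p(Suc k := j)) (Suc t)))
        = (case lp of (l, p) \<Rightarrow> (\<Prod>t<k. A $$ (p t, p (Suc t))) * A $$ (l, j))"
      using lp by simp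
  next
    fix q assume q: "q \<in> ?P (Suc k) j"
    then show "(case (q k, restrict q {..k}) of (l, p) \<Rightarrow> p(Suc k := j)) = q"
      by (auto simp: fun_eq_iff PiE_def extensional_def)
    show "(q k, restrict q {..k}) \<in> Sigma {..<n} (?P k)"
      using q by (auto simp: PiE_def Pi_def)
  qed
  finally show ?case .
qed

definition closed_walks :: "nat \<Rightarrow> nat \<Rightarrow> (nat \<Rightarrow> nat) set" where
  "closed_walks N m = {..<m} \<rightarrow>\<^sub>E {..<N}"

lemma finite_closed_walks: "finite (closed_walks N m)"
  by (simp add: closed_walks_def finite_PiE)

lemma closed_walk_less: "u \<in> closed_walks N m \<Longrightarrow> t < m \<Longrightarrow> u t < N"
  unfolding closed_walks_def by auto

lemma closed_walk_extensional: "u \<in> closed_walks N m \<Longrightarrow> \<not> t < m \<Longrightarrow> u t = undefined"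
  unfolding closed_walks_def by (auto simp: PiE_def extensional_def)

lemma mat_trace_power_eq_sum_closed_walks:
  fixes A :: "real mat"
  assumes A: "A \<in> carrier_mat n n" and m: "m \<ge> 1"
  shows "mat_trace (A ^\<^sub>m m) = (\<Sum>u\<in>closed_walks n m. \<Prod>t<m. A $$ (u t, u (Suc t mod m)))"
proof -
  let ?P = "\<lambda>i. {p \<in> {..m} \<rightarrow>\<^sub>E {..<n}. p 0 = i \<and> p m = i}"
  have "mat_trace (A ^\<^sub>m m) = (\<Sum>(i, p)\<in>Sigma {..<n} ?P. \<Prod>t<m. A $$ (p t, p (Suc t)))"
    using A by (simp add: mat_trace_def mat_power_entry_eq_sum_paths sum.Sigma finite_PiE)
  also have "\<dots> = (\<Sum>u\<in>closed_walks n m. \<Prod>t<m. A $$ (u t, u (Suc t mod m)))"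
  proof (rule sum.reindex_bij_witness[of _ "\<lambda>u. (u 0, (restrict u {..<m})(m := u 0))"
        "\<lambda>(i, p). restrict p {..<m}"])
    fix ip assume "ip \<in> Sigma {..<n} ?P"
    then obtain i p where ip: "ip = (i, p)" "p \<in> {..m} \<rightarrow>\<^sub>E {..<n}" "p 0 = i" "p m = i"
      by auto
    then show "(case ip of (i, p) \<Rightarrow> restrict p {..<m}) \<in> closed_walks n m"
      by (auto simp: closed_walks_def)
    show "(\<lambda>u. (u 0, (restrict u {..<m})(m := u 0))) (case ip of (i, p) \<Rightarrow> restrict p {..<m}) = ip"
      using ip m by (auto simp: fun_eq_iff PiE_def extensional_def)
    have "A $$ (p t, p (Suc t mod m)) = A $$ (p t, p (Suc t))" if "t < m" for t
      using that ip by (cases "Suc t = m") auto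
    then show "(\<Prod>t<m. A $$ ((case ip of (i, p) \<Rightarrow> restrict p {..<m}) t,
        (case ip of (i, p) \<Rightarrow> restrict p {..<m}) (Suc t mod m)))
      = (case ip of (i, p) \<Rightarrow> \<Prod>t<m. A $$ (p t, p (Suc t)))"
      using ip m by (auto intro!: prod.cong)
  next
    fix u assume u: "u \<in> closed_walks n m"
    then show "(case (u 0, (restrict u {..<m})(m := u 0)) of (i, p) \<Rightarrow> restrict p {..<m}) = u"
      by (auto simp: fun_eq_iff closed_walks_def PiE_def extensional_def)
    show "(u 0, (restrict u {..<m})(m := u 0)) \<in> Sigma {..<n} ?P"
      using u m by (auto simp: closed_walks_def PiE_def Pi_def extensional_def)
  qed
  finally show ?thesis .
qed

definition step_len :: "nat \<Rightarrow> (nat \<Rightarrow> nat) \<Rightarrow> nat \<Rightarrow> nat" where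
  "step_len m u t = gap (u t) (u (Suc t mod m))"

definition walk_weight :: "nat \<Rightarrow> (nat \<Rightarrow> real) \<Rightarrow> (nat \<Rightarrow> nat) \<Rightarrow> real" where
  "walk_weight m b u = (\<Prod>t<m. toeplitz_coeff b (step_len m u t))"

definition step_mult :: "nat \<Rightarrow> (nat \<Rightarrow> nat) \<Rightarrow> nat \<Rightarrow> nat" where
  "step_mult m u d = card {t \<in> {..<m}. step_len m u t = d}"

lemma mat_trace_toeplitz_power:
  assumes "m \<ge> 1"
  shows "mat_trace (toeplitz_mat N b ^\<^sub>m m) = (\<Sum>u\<in>closed_walks N m. walk_weight m b u)"
proof -
  have "toeplitz_mat N b $$ (u t, u (Suc t mod m)) = toeplitz_coeff b (step_len m u t)"
    if "u \<in> closed_walks N m" "t < m" for u t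
    using that assms by (simp add: toeplitz_mat_entry closed_walk_less step_len_def)
  then show ?thesis
    unfolding mat_trace_power_eq_sum_closed_walks[OF toeplitz_mat_carrier assms] walk_weight_def
    by (auto intro!: sum.cong prod.cong)
qed

lemma step_len_less: "u \<in> closed_walks N m \<Longrightarrow> t < m \<Longrightarrow> step_len m u t < N"
  unfolding step_len_def by (simp add: gap_less closed_walk_less)

lemma walk_weight_eq_prod_power:
  "u \<in> closed_walks N m \<Longrightarrow> walk_weight m b u = (\<Prod>d<N. toeplitz_coeff b d ^ step_mult m u d)"
  unfolding walk_weight_def step_mult_def
  by (rule prod_eq_prod_power_card) (auto simp: step_len_less)

lemma sum_step_mult: "u \<in> closed_walks N m \<Longrightarrow> (\<Sum>d<N. step_mult m u d) = m"
  unfolding step_mult_def by (subst sum_card_fibres) (auto simp: step_len_less)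

lemma step_mult_le: "step_mult m u d \<le> m"
  unfolding step_mult_def using card_mono[of "{..<m}" "{t \<in> {..<m}. step_len m u t = d}"] by auto

lemma step_mult_eq_0: "u \<in> closed_walks N m \<Longrightarrow> N \<le> d \<Longrightarrow> step_mult m u d = 0"
  unfolding step_mult_def using step_len_less[of u N m] by fastforce

lemma step_mult_pos_iff: "0 < step_mult m u d \<longleftrightarrow> (\<exists>t<m. step_len m u t = d)"
  by (auto simp: step_mult_def card_gt_0_iff)

section \<open>Counting matched pairs of walks\<close>

definition rotate_walk :: "nat \<Rightarrow> nat \<Rightarrow> (nat \<Rightarrow> nat) \<Rightarrow> nat \<Rightarrow> nat" where
  "rotate_walk m a u = (\<lambda>t\<in>{..<m}. u ((t + a) mod m))"

lemma rotate_walk_closed_walks: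
  "u \<in> closed_walks N m \<Longrightarrow> rotate_walk m a u \<in> closed_walks N m"
  unfolding rotate_walk_def closed_walks_def by (auto simp: PiE_iff)

lemma step_len_rotate_walk:
  "t < m \<Longrightarrow> step_len m (rotate_walk m a u) t = step_len m u ((t + a) mod m)"
  unfolding step_len_def rotate_walk_def by (simp add: mod_add_left_eq mod_Suc_eq)

lemma step_mult_rotate_walk:
  assumes "0 < m"
  shows "step_mult m (rotate_walk m a u) d = step_mult m u d"
proof -
  have "{t \<in> {..<m}. step_len m (rotate_walk m a u) t = d} = {t \<in> {..<m}. step_len m u ((t + a) mod m) = d}"
    by (auto simp: step_len_rotate_walk)
  then show ?thesis
    unfolding step_mult_def
    using card_Collect_bij_betw[OF bij_betw_add_mod[OF assms], of "\<lambda>s. step_len m u s = d" a] by simp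
qed

lemma rotate_walk_rotate_walk: "rotate_walk m b (rotate_walk m a u) = rotate_walk m (a + b) u"
  unfolding rotate_walk_def by (auto simp: fun_eq_iff mod_add_left_eq add.assoc add.commute[of a b])

lemma rotate_walk_multiple:
  assumes "u \<in> closed_walks N m" "a mod m = 0"
  shows "rotate_walk m a u = u"
  using assms unfolding rotate_walk_def
  by (auto simp: fun_eq_iff mod_add_right_eq[of _ a, symmetric] closed_walk_extensional)

definition join_walks :: "nat \<Rightarrow> (nat \<Rightarrow> nat) \<Rightarrow> (nat \<Rightarrow> nat) \<Rightarrow> nat \<Rightarrow> nat" where
  "join_walks m u v t = (if t < m then u t else v (t - m))"

definition joined_succ :: "nat \<Rightarrow> nat \<Rightarrow> nat" where
  "joined_succ m j = (if j = m - 1 then 0 else if j = 2 * m - 1 then m else Suc j)"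

definition joined_step_len :: "nat \<Rightarrow> (nat \<Rightarrow> nat) \<Rightarrow> nat \<Rightarrow> nat" where
  "joined_step_len m x j = gap (x j) (x (joined_succ m j))"

lemma joined_step_len_join_walks:
  assumes "t < 2 * m"
  shows "joined_step_len m (join_walks m u v) t =
    (if t < m then step_len m u t else step_len m v (t - m))"
  using assms unfolding joined_step_len_def step_len_def join_walks_def joined_succ_def
  by (auto simp: mod_Suc Suc_diff_le)

lemma card_joined_steps:
  "card {t \<in> {..<2 * m}. joined_step_len m (join_walks m u v) t = d} = step_mult m u d + step_mult m v d"
proof -
  let ?U = "{t \<in> {..<m}. step_len m u t = d}" and ?V = "{t \<in> {..<m}. step_len m v t = d}"
  have split: "{t \<in> {..<2 * m}. joined_step_len m (join_walks m u v) t = d} = ?U \<union> (\<lambda>t. t + m) ` ?V"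
  proof (intro equalityI subsetI)
    fix t assume t: "t \<in> {t \<in> {..<2 * m}. joined_step_len m (join_walks m u v) t = d}"
    show "t \<in> ?U \<union> (\<lambda>t. t + m) ` ?V"
    proof (cases "t < m")
      case False
      then have "t = (t - m) + m" "t - m < m"
        using t by auto
      then show ?thesis
        using t False by (auto simp: joined_step_len_join_walks intro: image_eqI[of _ _ "t - m"])
    qed (use t in \<open>simp add: joined_step_len_join_walks\<close>)
  qed (auto simp: joined_step_len_join_walks)
  have "card (?U \<union> (\<lambda>t. t + m) ` ?V) = card ?U + card ((\<lambda>t. t + m) ` ?V)"
    by (rule card_Un_disjoint) auto
  also have "card ((\<lambda>t. t + m) ` ?V) = card ?V"
    by (rule card_image) simp
  finally show ?thesis
    unfolding split step_mult_def .
qed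

definition aligned_pairs :: "nat \<Rightarrow> nat \<Rightarrow> ((nat \<Rightarrow> nat) \<times> (nat \<Rightarrow> nat)) set" where
  "aligned_pairs N m = {(u, v). u \<in> closed_walks N m \<and> v \<in> closed_walks N m \<and>
     (\<forall>d. step_mult m u d + step_mult m v d \<noteq> 1) \<and> step_len m u (m - 1) = step_len m v (m - 1)}"

definition inner_steps :: "nat \<Rightarrow> nat set" where
  "inner_steps m = {t. t < 2 * m \<and> t \<noteq> m - 1 \<and> t \<noteq> 2 * m - 1}"

definition fresh_steps :: "nat \<Rightarrow> (nat \<Rightarrow> nat) \<Rightarrow> nat set" where
  "fresh_steps m x = {t \<in> inner_steps m.
     \<forall>j \<in> inner_steps m. j < t \<longrightarrow> joined_step_len m x j \<noteq> joined_step_len m x t}"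

lemma card_inner_steps: "1 \<le> m \<Longrightarrow> card (inner_steps m) = 2 * m - 2"
proof -
  assume "1 \<le> m"
  then have "inner_steps m = {..<2 * m} - {m - 1, 2 * m - 1}" "{m - 1, 2 * m - 1} \<subseteq> {..<2 * m}"
      "card {m - 1, 2 * m - 1} = 2"
    by (auto simp: inner_steps_def)
  then show ?thesis
    by (simp add: card_Diff_subset)
qed

lemma card_fresh_steps_le:
  assumes m: "1 \<le> m" and uv: "(u, v) \<in> aligned_pairs N m"
  shows "card (fresh_steps m (join_walks m u v)) \<le> m - 1"
proof -
  let ?f = "joined_step_len m (join_walks m u v)" and ?S = "inner_steps m"
  have "\<not> 2 * m - 1 < m" "2 * m - 1 - m = m - 1"
    using m by auto
  then have closing: "?f (2 * m - 1) = ?f (m - 1)"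
    using uv m by (simp add: aligned_pairs_def joined_step_len_join_walks)
  \<comment> \<open>Only the common length of the two closing steps may occur just once among the inner steps.\<close>
  have "2 \<le> card {t \<in> ?S. ?f t = d}" if "d \<in> ?f ` ?S" "d \<noteq> ?f (m - 1)" for d
  proof -
    have "{t \<in> ?S. ?f t = d} = {t \<in> {..<2 * m}. ?f t = d}"
      using that closing by (auto simp: inner_steps_def)
    then have "card {t \<in> ?S. ?f t = d} = step_mult m u d + step_mult m v d"
      using card_joined_steps[of m u v d] by simp
    moreover have "card {t \<in> ?S. ?f t = d} \<noteq> 0"
      using that(1) by (auto simp: inner_steps_def)
    moreover have "step_mult m u d + step_mult m v d \<noteq> 1"
      using uv by (simp add: aligned_pairs_def)
    ultimately show ?thesis
      by linarith
  qed
  then have "2 * card (?f ` ?S) \<le> Suc (card ?S)"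
    by (intro card_image_le_half) (auto simp: inner_steps_def)
  then have "2 * card (?f ` ?S) \<le> Suc (2 * m - 2)"
    using m by (simp add: card_inner_steps)
  moreover have "card (fresh_steps m (join_walks m u v)) \<le> card (?f ` ?S)"
    by (rule card_le_card_image_of_distinct_values)
      (auto simp: inner_steps_def fresh_steps_def)
  ultimately show ?thesis
    by linarith
qed

(* The code Inl i says that the next vertex is the stored value vals i; the code Inr (j, up) says
  that the step has the same length as the earlier step j and goes up or down. The starting
  points of the two walks are vals 0 and vals 1. *)
definition decode_step ::
    "nat \<Rightarrow> (nat \<Rightarrow> nat) \<Rightarrow> (nat \<Rightarrow> nat + nat \<times> bool) \<Rightarrow> (nat \<Rightarrow> nat) \<Rightarrow> nat \<Rightarrow> nat" where
  "decode_step m vals code x t =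
    (if Suc t = m then vals 1 else
     case code t of
       Inl i \<Rightarrow> vals i
     | Inr (j, up) \<Rightarrow> if up then x t + joined_step_len m x j else x t - joined_step_len m x j)"

primrec decode_prefix ::
    "nat \<Rightarrow> (nat \<Rightarrow> nat) \<Rightarrow> (nat \<Rightarrow> nat + nat \<times> bool) \<Rightarrow> nat \<Rightarrow> nat \<Rightarrow> nat" where
  "decode_prefix m vals code 0 = (\<lambda>_. vals 0)"
| "decode_prefix m vals code (Suc t) = (decode_prefix m vals code t)
     (Suc t := decode_step m vals code (decode_prefix m vals code t) t)"

definition decode_pair ::
    "nat \<Rightarrow> (nat \<Rightarrow> nat) \<Rightarrow> (nat \<Rightarrow> nat + nat \<times> bool) \<Rightarrow> (nat \<Rightarrow> nat) \<times> (nat \<Rightarrow> nat)" where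
  "decode_pair m vals code = (let x = decode_prefix m vals code (2 * m - 1) in
     (restrict x {..<m}, restrict (\<lambda>t. x (t + m)) {..<m}))"

definition decodes_to :: "nat \<Rightarrow> (nat \<Rightarrow> nat) \<Rightarrow> (nat \<Rightarrow> nat + nat \<times> bool) \<Rightarrow> (nat \<Rightarrow> nat) \<Rightarrow> bool" where
  "decodes_to m vals code x \<longleftrightarrow> x 0 = vals 0 \<and>
     (\<forall>t y. Suc t < 2 * m \<longrightarrow> (\<forall>s\<le>t. y s = x s) \<longrightarrow> decode_step m vals code y t = x (Suc t))"

lemma decode_prefix_eq:
  assumes "decodes_to m vals code x" "k < 2 * m" "s \<le> k"
  shows "decode_prefix m vals code k s = x s"
  using assms(2,3)
proof (induction k arbitrary: s)
  case 0
  then show ?case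
    using assms(1) by (simp add: decodes_to_def)
next
  case (Suc k)
  then have "decode_step m vals code (decode_prefix m vals code k) k = x (Suc k)"
    using assms(1) unfolding decodes_to_def by simp
  then show ?case
    using Suc by (auto simp: le_Suc_eq)
qed

lemma decode_pair_eq:
  assumes "1 \<le> m" "u \<in> closed_walks N m" "v \<in> closed_walks N m"
    and "decodes_to m vals code (join_walks m u v)"
  shows "decode_pair m vals code = (u, v)"
proof -
  have x: "decode_prefix m vals code (2 * m - 1) s = join_walks m u v s" if "s \<le> 2 * m - 1" for s
    using decode_prefix_eq[OF assms(4) _ that] assms(1) by simp
  have "restrict (decode_prefix m vals code (2 * m - 1)) {..<m} = u"
    using x assms(2) by (auto simp: fun_eq_iff join_walks_def closed_walk_extensional)
  moreover have "restrict (\<lambda>t. decode_prefix m vals code (2 * m - 1) (t + m)) {..<m} = v"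
    using x assms(3) by (auto simp: fun_eq_iff join_walks_def closed_walk_extensional)
  ultimately show ?thesis
    by (simp add: decode_pair_def)
qed

definition start_values :: "nat \<Rightarrow> nat \<Rightarrow> (nat \<Rightarrow> nat) set" where
  "start_values N m = {..m} \<rightarrow>\<^sub>E {..<N}"

definition step_codes :: "nat \<Rightarrow> (nat \<Rightarrow> nat + nat \<times> bool) set" where
  "step_codes m = {..<2 * m} \<rightarrow>\<^sub>E (Inl ` {..m} \<union> Inr ` ({..<2 * m} \<times> UNIV))"

lemma finite_step_codes: "finite (step_codes m)"
  unfolding step_codes_def by (intro finite_PiE) auto

lemma decode_step_repeated_length:
  assumes t: "t \<in> inner_steps m" and j: "j \<in> inner_steps m" "j < t"
    and len: "joined_step_len m x j = joined_step_len m x t"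
    and y: "\<forall>s\<le>t. y s = x s" and code: "code t = Inr (j, x t \<le> x (Suc t))"
  shows "decode_step m vals code y t = x (Suc t)"
proof -
  have "j \<le> t" "joined_succ m j \<le> t" "Suc t \<noteq> m" "joined_succ m t = Suc t"
    using t j by (auto simp: inner_steps_def joined_succ_def)
  then have "joined_step_len m y j = gap (x t) (x (Suc t))"
    using len y by (simp add: joined_step_len_def)
  then show ?thesis
    using code y \<open>Suc t \<noteq> m\<close> by (auto simp: decode_step_def gap_def)
qed

definition earlier_step_same_length :: "nat \<Rightarrow> (nat \<Rightarrow> nat) \<Rightarrow> nat \<Rightarrow> nat" where
  "earlier_step_same_length m x t =
    (SOME j. j \<in> inner_steps m \<and> j < t \<and> joined_step_len m x j = joined_step_len m x t)"

definition stored_values :: "nat \<Rightarrow> (nat \<Rightarrow> nat) \<Rightarrow> (nat \<Rightarrow> nat) \<Rightarrow> nat \<Rightarrow> nat" where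
  "stored_values m x h = (\<lambda>i\<in>{..m}.
     if i \<in> h ` fresh_steps m x then x (Suc (inv_into (fresh_steps m x) h i))
     else if i = 1 then x m else x 0)"

definition step_code_of :: "nat \<Rightarrow> (nat \<Rightarrow> nat) \<Rightarrow> (nat \<Rightarrow> nat) \<Rightarrow> nat \<Rightarrow> nat + nat \<times> bool" where
  "step_code_of m x h = (\<lambda>t\<in>{..<2 * m}.
     if t \<in> fresh_steps m x then Inl (h t)
     else if t \<in> inner_steps m then Inr (earlier_step_same_length m x t, x t \<le> x (Suc t))
     else Inl 0)"

lemma earlier_step_same_length:
  assumes "t \<in> inner_steps m" "t \<notin> fresh_steps m x"
  shows "earlier_step_same_length m x t \<in> inner_steps m" "earlier_step_same_length m x t < t"
    and "joined_step_len m x (earlier_step_same_length m x t) = joined_step_len m x t"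
  using someI_ex[of "\<lambda>j. j \<in> inner_steps m \<and> j < t \<and> joined_step_len m x j = joined_step_len m x t"]
    assms unfolding earlier_step_same_length_def fresh_steps_def by auto

lemma stored_values_in_start_values:
  assumes "1 \<le> m" "\<And>t. t < 2 * m \<Longrightarrow> x t < N"
  shows "stored_values m x h \<in> start_values N m"
proof -
  have "Suc t < 2 * m" if "t \<in> fresh_steps m x" for t
    using that by (auto simp: fresh_steps_def inner_steps_def)
  then have "x (Suc (inv_into (fresh_steps m x) h i)) < N" if "i \<in> h ` fresh_steps m x" for i
    using assms(2) inv_into_into[OF that] by blast
  then show ?thesis
    using assms by (auto simp: stored_values_def start_values_def)
qed

lemma step_code_of_in_step_codes:
  assumes "h ` fresh_steps m x \<subseteq> {..m}"
  shows "step_code_of m x h \<in> step_codes m"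
  using assms earlier_step_same_length(1)[of _ m x]
  by (fastforce simp: step_code_of_def step_codes_def inner_steps_def)

lemma decodes_to_stored_values:
  assumes h: "h ` fresh_steps m x \<subseteq> {2..m}" "inj_on h (fresh_steps m x)"
  shows "decodes_to m (stored_values m x h) (step_code_of m x h) x"
  unfolding decodes_to_def
proof (intro conjI allI impI)
  show "x 0 = stored_values m x h 0"
    using h(1) by (auto simp: stored_values_def)
  fix t y assume t: "Suc t < 2 * m" and y: "\<forall>s\<le>t. y s = x s"
  consider "Suc t = m" | "t \<in> fresh_steps m x" | "t \<in> inner_steps m" "t \<notin> fresh_steps m x"
    using t by (force simp: inner_steps_def)
  then show "decode_step m (stored_values m x h) (step_code_of m x h) y t = x (Suc t)"
  proof cases
    case 1
    then show ?thesis
      using h(1) by (auto simp: decode_step_def stored_values_def)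
  next
    case 2
    have "h t \<le> m"
      using h(1) 2 by auto
    moreover have "Suc t \<noteq> m" "step_code_of m x h t = Inl (h t)"
      using t 2 by (auto simp: step_code_of_def fresh_steps_def inner_steps_def)
    moreover have "inv_into (fresh_steps m x) h (h t) = t"
      using h(2) 2 by (rule inv_into_f_f)
    ultimately show ?thesis
      using 2 by (simp add: decode_step_def stored_values_def)
  next
    case 3
    then show ?thesis
      using t y earlier_step_same_length[OF 3]
      by (intro decode_step_repeated_length) (auto simp: step_code_of_def)
  qed
qed

lemma aligned_pair_encoding:
  assumes m: "1 \<le> m" and uv: "(u, v) \<in> aligned_pairs N m"
  obtains vals code where "vals \<in> start_values N m" "code \<in> step_codes m"
    "decodes_to m vals code (join_walks m u v)"
proof -
  let ?x = "join_walks m u v"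
  have "finite (fresh_steps m ?x)"
    by (rule finite_subset[of _ "{..<2 * m}"]) (auto simp: fresh_steps_def inner_steps_def)
  moreover have "card (fresh_steps m ?x) \<le> card {2..m}"
    using card_fresh_steps_le[OF m uv] by simp
  ultimately obtain h where h: "h ` fresh_steps m ?x \<subseteq> {2..m}" "inj_on h (fresh_steps m ?x)"
    using card_le_inj[of _ "{2..m}"] by auto
  have "?x t < N" if "t < 2 * m" for t
    using uv that by (auto simp: aligned_pairs_def join_walks_def closed_walk_less)
  then show ?thesis
    using h(1) by (intro that[OF stored_values_in_start_values[OF m] step_code_of_in_step_codes
        decodes_to_stored_values[OF h]]) auto
qed

lemma card_aligned_pairs_le:
  assumes "1 \<le> m"
  shows "card (aligned_pairs N m) \<le> N ^ Suc m * card (step_codes m)"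
proof -
  let ?decode = "\<lambda>(vals, code). decode_pair m vals code"
  have fin: "finite (start_values N m \<times> step_codes m)"
    by (simp add: start_values_def finite_PiE finite_step_codes)
  have "aligned_pairs N m \<subseteq> ?decode ` (start_values N m \<times> step_codes m)"
  proof
    fix uv assume uv: "uv \<in> aligned_pairs N m"
    then obtain u v where "uv = (u, v)" "u \<in> closed_walks N m" "v \<in> closed_walks N m"
      by (auto simp: aligned_pairs_def)
    with uv obtain vals code where "vals \<in> start_values N m" "code \<in> step_codes m"
      "decode_pair m vals code = uv"
      using aligned_pair_encoding[OF assms] decode_pair_eq[OF assms] by metis
    then show "uv \<in> ?decode ` (start_values N m \<times> step_codes m)"
      by force
  qed
  then have "card (aligned_pairs N m) \<le> card (?decode ` (start_values N m \<times> step_codes m))"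
    using fin by (intro card_mono) auto
  also have "\<dots> \<le> card (start_values N m \<times> step_codes m)"
    using fin by (rule card_image_le)
  also have "\<dots> = N ^ Suc m * card (step_codes m)"
    by (simp add: card_cartesian_product start_values_def card_PiE)
  finally show ?thesis .
qed

definition matched :: "nat \<Rightarrow> (nat \<Rightarrow> nat) \<Rightarrow> (nat \<Rightarrow> nat) \<Rightarrow> bool" where
  "matched m u v \<longleftrightarrow> (\<forall>d. step_mult m u d + step_mult m v d \<noteq> 1) \<and>
     (\<exists>d. 0 < step_mult m u d \<and> 0 < step_mult m v d)"

definition matched_pairs :: "nat \<Rightarrow> nat \<Rightarrow> ((nat \<Rightarrow> nat) \<times> (nat \<Rightarrow> nat)) set" where
  "matched_pairs N m = {(u, v). u \<in> closed_walks N m \<and> v \<in> closed_walks N m \<and> matched m u v}"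

lemma rotate_step_to_last:
  assumes u: "u \<in> closed_walks N m" and c: "c < m"
  shows "step_len m (rotate_walk m (Suc c) u) (m - 1) = step_len m u c"
    and "rotate_walk m (m - Suc c) (rotate_walk m (Suc c) u) = u"
proof -
  have "(m - 1 + Suc c) mod m = c"
    using c by (simp add: le_mod_geq)
  then show "step_len m (rotate_walk m (Suc c) u) (m - 1) = step_len m u c"
    using c by (simp add: step_len_rotate_walk)
  show "rotate_walk m (m - Suc c) (rotate_walk m (Suc c) u) = u"
    using c by (simp add: rotate_walk_rotate_walk rotate_walk_multiple[OF u])
qed

lemma matched_pair_rotates_to_aligned:
  assumes uv: "(u, v) \<in> matched_pairs N m"
  obtains a b u' v' where "a < m" "b < m" "(u', v') \<in> aligned_pairs N m"
    "u = rotate_walk m a u'" "v = rotate_walk m b v'"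
proof -
  have u: "u \<in> closed_walks N m" and v: "v \<in> closed_walks N m"
    using uv by (auto simp: matched_pairs_def)
  obtain d where "0 < step_mult m u d" "0 < step_mult m v d"
    using uv by (auto simp: matched_pairs_def matched_def)
  then obtain c c' where c: "c < m" "step_len m u c = d" and c': "c' < m" "step_len m v c' = d"
    by (auto simp: step_mult_pos_iff)
  let ?u = "rotate_walk m (Suc c) u" and ?v = "rotate_walk m (Suc c') v"
  have "(?u, ?v) \<in> aligned_pairs N m"
    using uv c c' rotate_step_to_last(1)[OF u c(1)] rotate_step_to_last(1)[OF v c'(1)]
    by (auto simp: aligned_pairs_def matched_pairs_def matched_def rotate_walk_closed_walks
        step_mult_rotate_walk)
  moreover have "m - Suc c < m" "m - Suc c' < m"
    using c c' by auto
  ultimately show ?thesis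
    using that rotate_step_to_last(2)[OF u c(1)] rotate_step_to_last(2)[OF v c'(1)] by metis
qed

lemma card_matched_pairs_le:
  assumes "1 \<le> m"
  shows "card (matched_pairs N m) \<le> m * m * (N ^ Suc m * card (step_codes m))"
proof -
  let ?rotate = "\<lambda>(a, b, u, v). (rotate_walk m a u, rotate_walk m b v)"
  have "finite (aligned_pairs N m)"
    by (rule finite_subset[of _ "closed_walks N m \<times> closed_walks N m"])
      (auto simp: aligned_pairs_def finite_closed_walks)
  then have fin: "finite ({..<m} \<times> {..<m} \<times> aligned_pairs N m)"
    by simp
  have "matched_pairs N m \<subseteq> ?rotate ` ({..<m} \<times> {..<m} \<times> aligned_pairs N m)"
  proof
    fix uv assume "uv \<in> matched_pairs N m"
    moreover obtain u v where "uv = (u, v)"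
      by fastforce
    ultimately obtain a b u' v' where "a < m" "b < m" "(u', v') \<in> aligned_pairs N m"
      "uv = (rotate_walk m a u', rotate_walk m b v')"
      using matched_pair_rotates_to_aligned by metis
    then show "uv \<in> ?rotate ` ({..<m} \<times> {..<m} \<times> aligned_pairs N m)"
      by (intro image_eqI[of _ _ "(a, b, u', v')"]) auto
  qed
  then have "card (matched_pairs N m) \<le> card (?rotate ` ({..<m} \<times> {..<m} \<times> aligned_pairs N m))"
    using fin by (intro card_mono) auto
  also have "\<dots> \<le> card ({..<m} \<times> {..<m} \<times> aligned_pairs N m)"
    using fin by (rule card_image_le)
  also have "\<dots> = m * m * card (aligned_pairs N m)"
    by (simp add: card_cartesian_product)
  also have "\<dots> \<le> m * m * (N ^ Suc m * card (step_codes m))"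
    using card_aligned_pairs_le[OF assms] by simp
  finally show ?thesis .
qed

section \<open>Moments of walk weights\<close>

locale centered_density =
  fixes p :: "real \<Rightarrow> real"
  assumes p_meas: "p \<in> borel_measurable lborel"
    and p_nonneg: "\<And>x. 0 \<le> p x"
    and p_prob: "prob_space (entry_dist p)"
    and p_moments: "\<And>k::nat. integrable lborel (\<lambda>x. x ^ k * p x)"
    and p_mean: "(\<integral>x. x * p x \<partial>lborel) = 0"
begin

definition entry_moment :: "nat \<Rightarrow> real" where
  "entry_moment k = (\<integral>x. x ^ k \<partial>entry_dist p)"

lemma integrable_entry_power: "integrable (entry_dist p) (\<lambda>x. x ^ k)"
  unfolding entry_dist_def
  by (subst integrable_density) (use p_meas p_nonneg p_moments[of k] in \<open>auto simp: mult.commute\<close>)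

lemma entry_moment_0: "entry_moment 0 = 1"
  using prob_space.prob_space[OF p_prob] by (simp add: entry_moment_def)

lemma entry_moment_1: "entry_moment 1 = 0"
proof -
  have "entry_moment 1 = (\<integral>x. x * p x \<partial>lborel)"
    unfolding entry_moment_def entry_dist_def
    by (subst integral_density) (use p_meas p_nonneg in \<open>auto simp: mult.commute\<close>)
  then show ?thesis
    using p_mean by simp
qed

lemma abs_entry_moment_le:
  assumes "k \<le> 2 * n"
  shows "\<bar>entry_moment k\<bar> \<le> 1 + entry_moment (2 * n)"
proof -
  interpret prob_space "entry_dist p"
    by (rule p_prob)
  have "\<bar>entry_moment k\<bar> \<le> (\<integral>x. \<bar>x ^ k\<bar> \<partial>entry_dist p)"
    unfolding entry_moment_def using integral_norm_bound[of "entry_dist p" "\<lambda>x. x ^ k"] by simp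
  also have "\<dots> \<le> (\<integral>x. 1 + x ^ (2 * n) \<partial>entry_dist p)"
    using assms by (intro integral_mono integrable_abs integrable_entry_power
        abs_power_le_one_plus_even_power) (auto intro: integrable_entry_power)
  also have "\<dots> = 1 + entry_moment (2 * n)"
    using integrable_entry_power by (simp add: entry_moment_def prob_space)
  finally show ?thesis .
qed

definition coeff_moment :: "nat \<Rightarrow> nat \<Rightarrow> real" where
  "coeff_moment d k = (if d = 0 then 0 ^ k else entry_moment k)"

lemma coeff_moment_0: "coeff_moment d 0 = 1"
  by (simp add: coeff_moment_def entry_moment_0)

lemma coeff_moment_1: "coeff_moment d 1 = 0"
  using entry_moment_1 by (simp add: coeff_moment_def)

lemma integral_prod_toeplitz_coeff_powers:
  assumes N: "N \<ge> 1"
  shows "integrable (entries_space p N) (\<lambda>b. \<Prod>d<N. toeplitz_coeff b d ^ n d)"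
    and "(\<integral>b. (\<Prod>d<N. toeplitz_coeff b d ^ n d) \<partial>entries_space p N) = (\<Prod>d<N. coeff_moment d (n d))"
proof -
  interpret product_sigma_finite "\<lambda>_. entry_dist p"
    unfolding product_sigma_finite_def using prob_space_imp_sigma_finite[OF p_prob] by simp
  have split_0: "(\<Prod>d<N. f d) = f 0 * (\<Prod>d\<in>{1..<N}. f d)" for f :: "nat \<Rightarrow> real"
    using N by (simp add: atLeast0LessThan[symmetric] prod.atLeast_Suc_lessThan)
  have coeffs: "(\<Prod>d<N. toeplitz_coeff b d ^ n d) = 0 ^ n 0 * (\<Prod>d\<in>{1..<N}. b d ^ n d)" for b
    by (simp add: split_0 toeplitz_coeff_def)
  have "integrable (entries_space p N) (\<lambda>b. \<Prod>d\<in>{1..<N}. b d ^ n d)"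
    unfolding entries_space_def by (rule product_integrable_prod) (auto intro: integrable_entry_power)
  then show "integrable (entries_space p N) (\<lambda>b. \<Prod>d<N. toeplitz_coeff b d ^ n d)"
    unfolding coeffs by simp
  have "(\<integral>b. (\<Prod>d\<in>{1..<N}. b d ^ n d) \<partial>entries_space p N) = (\<Prod>d\<in>{1..<N}. entry_moment (n d))"
    unfolding entries_space_def entry_moment_def
    by (rule product_integral_prod) (auto intro: integrable_entry_power)
  moreover have "(\<Prod>d\<in>{1..<N}. coeff_moment d (n d)) = (\<Prod>d\<in>{1..<N}. entry_moment (n d))"
    by (rule prod.cong) (auto simp: coeff_moment_def)
  ultimately show "(\<integral>b. (\<Prod>d<N. toeplitz_coeff b d ^ n d) \<partial>entries_space p N) = (\<Prod>d<N. coeff_moment d (n d))"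
    unfolding coeffs split_0[of "\<lambda>d. coeff_moment d (n d)"] by (simp add: coeff_moment_def)
qed

definition moment_const :: "nat \<Rightarrow> real" where
  "moment_const m = 1 + entry_moment (2 * m)"

lemma moment_const_ge_1: "1 \<le> moment_const m"
proof -
  have "0 \<le> entry_moment (2 * m)"
    unfolding entry_moment_def by (intro integral_nonneg_AE) (simp add: power_mult)
  then show ?thesis
    by (simp add: moment_const_def)
qed

lemma abs_coeff_moment_le:
  assumes "k \<le> 2 * m"
  shows "\<bar>coeff_moment d k\<bar> \<le> moment_const m ^ k"
proof (cases "k = 0")
  case False
  then have "\<bar>coeff_moment d k\<bar> \<le> moment_const m"
    using abs_entry_moment_le[OF assms] moment_const_ge_1[of m]
    by (auto simp: coeff_moment_def moment_const_def power_0_left)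
  also have "\<dots> \<le> moment_const m ^ k"
    using moment_const_ge_1[of m] False by (simp add: power_increasing[of 1 k, simplified])
  finally show ?thesis .
qed (simp add: coeff_moment_0)

lemma abs_prod_coeff_moment_le:
  assumes "\<And>d. d < N \<Longrightarrow> n d \<le> 2 * m"
  shows "\<bar>\<Prod>d<N. coeff_moment d (n d)\<bar> \<le> moment_const m ^ (\<Sum>d<N. n d)"
proof -
  have "\<bar>\<Prod>d<N. coeff_moment d (n d)\<bar> = (\<Prod>d<N. \<bar>coeff_moment d (n d)\<bar>)"
    by (rule abs_prod)
  also have "\<dots> \<le> (\<Prod>d<N. moment_const m ^ n d)"
    using assms by (intro prod_mono) (auto intro: abs_coeff_moment_le)
  also have "\<dots> = moment_const m ^ (\<Sum>d<N. n d)"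
    by (simp add: power_sum)
  finally show ?thesis .
qed

definition weight_cov :: "nat \<Rightarrow> nat \<Rightarrow> (nat \<Rightarrow> nat) \<Rightarrow> (nat \<Rightarrow> nat) \<Rightarrow> real" where
  "weight_cov N m u v = (\<Prod>d<N. coeff_moment d (step_mult m u d + step_mult m v d))
     - (\<Prod>d<N. coeff_moment d (step_mult m u d)) * (\<Prod>d<N. coeff_moment d (step_mult m v d))"

lemma weight_cov_eq_0:
  assumes u: "u \<in> closed_walks N m" and v: "v \<in> closed_walks N m" and "\<not> matched m u v"
  shows "weight_cov N m u v = 0"
proof (cases "\<exists>d. step_mult m u d + step_mult m v d = 1")
  case True
  then obtain d where d: "step_mult m u d + step_mult m v d = 1"
    by blast
  then have "d < N"
    using step_mult_eq_0[OF u] step_mult_eq_0[OF v] by (metis add_0 not_le zero_neq_one)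
  have vanish: "(\<Prod>d<N. coeff_moment d (f d)) = 0" if "f d = 1" for f
    using that \<open>d < N\<close> coeff_moment_1 by (intro prod_zero bexI[of _ d]) auto
  have "(\<Prod>d<N. coeff_moment d (step_mult m u d + step_mult m v d)) = 0"
    using d by (intro vanish)
  moreover have "(\<Prod>d<N. coeff_moment d (step_mult m u d)) * (\<Prod>d<N. coeff_moment d (step_mult m v d)) = 0"
  proof -
    have "step_mult m u d = 1 \<or> step_mult m v d = 1"
      using d by auto
    then show ?thesis
      by (metis mult_zero_left mult_zero_right vanish)
  qed
  ultimately show ?thesis
    unfolding weight_cov_def by (simp only: diff_self)
next
  case False
  then have "step_mult m u d = 0 \<or> step_mult m v d = 0" for d
    using assms(3) by (auto simp: matched_def)
  then have "coeff_moment d (step_mult m u d + step_mult m v d)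
      = coeff_moment d (step_mult m u d) * coeff_moment d (step_mult m v d)" for d
    by (metis add_0 add_0_right coeff_moment_0 mult_1 mult_1_right)
  then show ?thesis
    by (simp add: weight_cov_def prod.distrib)
qed

lemma abs_weight_cov_le:
  assumes u: "u \<in> closed_walks N m" and v: "v \<in> closed_walks N m"
  shows "\<bar>weight_cov N m u v\<bar> \<le> 2 * moment_const m ^ (2 * m)"
proof -
  have joint: "\<bar>\<Prod>d<N. coeff_moment d (step_mult m u d + step_mult m v d)\<bar> \<le> moment_const m ^ (2 * m)"
    using abs_prod_coeff_moment_le[of N "\<lambda>d. step_mult m u d + step_mult m v d" m]
    by (simp add: step_mult_le add_mono mult_2 sum.distrib sum_step_mult[OF u] sum_step_mult[OF v])
  have single: "\<bar>\<Prod>d<N. coeff_moment d (step_mult m w d)\<bar> \<le> moment_const m ^ m"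
    if "w \<in> closed_walks N m" for w
    using abs_prod_coeff_moment_le[of N "step_mult m w" m] step_mult_le[of m w]
    by (simp add: sum_step_mult[OF that] le_trans[OF _ le_add1] mult_2)
  have "\<bar>(\<Prod>d<N. coeff_moment d (step_mult m u d)) * (\<Prod>d<N. coeff_moment d (step_mult m v d))\<bar>
      \<le> moment_const m ^ m * moment_const m ^ m"
    unfolding abs_mult by (rule mult_mono) (use single[OF u] single[OF v] in auto)
  also have "\<dots> = moment_const m ^ (2 * m)"
    by (simp add: power_add[symmetric] mult_2)
  finally show ?thesis
    using joint unfolding weight_cov_def by linarith
qed

lemma variance_trace_eq_sum_weight_cov:
  assumes N: "N \<ge> 1"
  shows "(\<integral>b. (\<Sum>u\<in>closed_walks N m. walk_weight m b u)\<^sup>2 \<partial>entries_space p N)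
       - (\<integral>b. (\<Sum>u\<in>closed_walks N m. walk_weight m b u) \<partial>entries_space p N)\<^sup>2
       = (\<Sum>u\<in>closed_walks N m. \<Sum>v\<in>closed_walks N m. weight_cov N m u v)"
proof -
  let ?M = "entries_space p N" and ?W = "closed_walks N m"
  have pair: "walk_weight m b u * walk_weight m b v
      = (\<Prod>d<N. toeplitz_coeff b d ^ (step_mult m u d + step_mult m v d))"
    if "u \<in> ?W" "v \<in> ?W" for b u v
    by (simp add: walk_weight_eq_prod_power[OF that(1)] walk_weight_eq_prod_power[OF that(2)]
        power_add prod.distrib)
  have "(\<integral>b. (\<Sum>u\<in>?W. walk_weight m b u)\<^sup>2 \<partial>?M)
      = (\<integral>b. (\<Sum>u\<in>?W. \<Sum>v\<in>?W. \<Prod>d<N. toeplitz_coeff b d ^ (step_mult m u d + step_mult m v d)) \<partial>?M)"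
    by (intro Bochner_Integration.integral_cong) (simp_all add: power2_eq_square sum_product pair)
  also have "\<dots> = (\<Sum>u\<in>?W. \<Sum>v\<in>?W. \<Prod>d<N. coeff_moment d (step_mult m u d + step_mult m v d))"
    by (simp add: integral_sum integrable_sum integral_prod_toeplitz_coeff_powers[OF N])
  finally have second: "(\<integral>b. (\<Sum>u\<in>?W. walk_weight m b u)\<^sup>2 \<partial>?M)
      = (\<Sum>u\<in>?W. \<Sum>v\<in>?W. \<Prod>d<N. coeff_moment d (step_mult m u d + step_mult m v d))" .
  have "(\<integral>b. (\<Sum>u\<in>?W. walk_weight m b u) \<partial>?M)
      = (\<integral>b. (\<Sum>u\<in>?W. \<Prod>d<N. toeplitz_coeff b d ^ step_mult m u d) \<partial>?M)"
    by (intro Bochner_Integration.integral_cong) (simp_all add: walk_weight_eq_prod_power)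
  also have "\<dots> = (\<Sum>u\<in>?W. \<Prod>d<N. coeff_moment d (step_mult m u d))"
    by (simp add: integral_sum integral_prod_toeplitz_coeff_powers[OF N])
  finally have first: "(\<integral>b. (\<Sum>u\<in>?W. walk_weight m b u) \<partial>?M)
      = (\<Sum>u\<in>?W. \<Prod>d<N. coeff_moment d (step_mult m u d))" .
  show ?thesis
    unfolding second first weight_cov_def
    by (simp add: power2_eq_square sum_product sum_subtractf)
qed

lemma abs_sum_weight_cov_le:
  "\<bar>\<Sum>u\<in>closed_walks N m. \<Sum>v\<in>closed_walks N m. weight_cov N m u v\<bar>
     \<le> 2 * moment_const m ^ (2 * m) * card (matched_pairs N m)"
proof -
  have "(\<Sum>u\<in>closed_walks N m. \<Sum>v\<in>closed_walks N m. weight_cov N m u v)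
      = (\<Sum>(u, v)\<in>closed_walks N m \<times> closed_walks N m. weight_cov N m u v)"
    by (rule sum.cartesian_product)
  also have "\<dots> = (\<Sum>(u, v)\<in>matched_pairs N m. weight_cov N m u v)"
    using weight_cov_eq_0
    by (intro sum.mono_neutral_right) (auto simp: finite_closed_walks matched_pairs_def)
  finally have "\<bar>\<Sum>u\<in>closed_walks N m. \<Sum>v\<in>closed_walks N m. weight_cov N m u v\<bar>
      \<le> (\<Sum>(u, v)\<in>matched_pairs N m. \<bar>weight_cov N m u v\<bar>)"
    by (simp add: sum_abs case_prod_beta)
  also have "\<dots> \<le> (\<Sum>(u, v)\<in>matched_pairs N m. 2 * moment_const m ^ (2 * m))"
    by (intro sum_mono) (auto simp: matched_pairs_def abs_weight_cov_le)
  finally show ?thesis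
    by (simp add: mult.commute)
qed

lemma abs_variance_moment_le:
  assumes m: "m \<ge> 1" and N: "N \<ge> 1"
  shows "\<bar>expect_entries p N (\<lambda>b. (moment_AN m N b)\<^sup>2) - (expect_entries p N (moment_AN m N))\<^sup>2\<bar>
     \<le> 2 * moment_const m ^ (2 * m) * (m * m * card (step_codes m)) / N"
proof -
  let ?M = "entries_space p N" and ?K = "2 * moment_const m ^ (2 * m) * (m * m * card (step_codes m))"
  define T where "T b = (\<Sum>u\<in>closed_walks N m. walk_weight m b u)" for b
  define c where "c = real N powr (real m / 2 + 1)"
  have moment: "moment_AN m N = (\<lambda>b. T b / c)"
    by (simp add: fun_eq_iff moment_AN_def T_def c_def mat_trace_toeplitz_power[OF m])
  have "real m / 2 + 1 + (real m / 2 + 1) = real (m + 2)"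
    by simp
  then have "c\<^sup>2 = real N powr real (m + 2)"
    unfolding c_def power2_eq_square powr_add[symmetric] by metis
  also have "\<dots> = real N ^ (m + 2)"
    using N by (intro powr_realpow) simp
  finally have c2: "c\<^sup>2 = real N ^ (m + 2)" .
  have "expect_entries p N (\<lambda>b. (moment_AN m N b)\<^sup>2) - (expect_entries p N (moment_AN m N))\<^sup>2
      = ((\<integral>b. (T b)\<^sup>2 \<partial>?M) - (\<integral>b. T b \<partial>?M)\<^sup>2) / c\<^sup>2"
    by (simp add: expect_entries_def moment power_divide diff_divide_distrib)
  also have "\<dots> = (\<Sum>u\<in>closed_walks N m. \<Sum>v\<in>closed_walks N m. weight_cov N m u v) / real N ^ (m + 2)"
    unfolding c2 T_def variance_trace_eq_sum_weight_cov[OF N] ..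
  finally have variance: "expect_entries p N (\<lambda>b. (moment_AN m N b)\<^sup>2) - (expect_entries p N (moment_AN m N))\<^sup>2
      = (\<Sum>u\<in>closed_walks N m. \<Sum>v\<in>closed_walks N m. weight_cov N m u v) / real N ^ (m + 2)" .
  have "\<bar>\<Sum>u\<in>closed_walks N m. \<Sum>v\<in>closed_walks N m. weight_cov N m u v\<bar>
      \<le> 2 * moment_const m ^ (2 * m) * card (matched_pairs N m)"
    by (rule abs_sum_weight_cov_le)
  also have "\<dots> \<le> 2 * moment_const m ^ (2 * m) * (m * m * (N ^ Suc m * card (step_codes m)))"
    using card_matched_pairs_le[OF m, of N] moment_const_ge_1[of m]
    by (intro mult_left_mono) (simp_all flip: of_nat_mult of_nat_power)
  also have "\<dots> = ?K / N * real N ^ (m + 2)"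
    using N by (simp add: field_simps)
  finally show ?thesis
    unfolding variance using N by (simp add: abs_divide divide_le_eq)
qed

lemma variance_moment_0:
  assumes "N \<ge> 1"
  shows "expect_entries p N (\<lambda>b. (moment_AN 0 N b)\<^sup>2) - (expect_entries p N (moment_AN 0 N))\<^sup>2 = 0"
proof -
  interpret prob_space "entries_space p N"
    unfolding entries_space_def by (rule prob_space_PiM) (rule p_prob)
  have "moment_AN 0 N = (\<lambda>_. 1)"
    using assms by (simp add: fun_eq_iff moment_AN_def mat_trace_def toeplitz_mat_def)
  then show ?thesis
    by (simp add: expect_entries_def prob_space)
qed

lemma variance_moment_bound:
  obtains C where "\<And>N. N \<ge> 1 \<Longrightarrow>
    \<bar>expect_entries p N (\<lambda>b. (moment_AN m N b)\<^sup>2) - (expect_entries p N (moment_AN m N))\<^sup>2\<bar> \<le> C / N"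
proof (cases "m = 0")
  case True
  then show ?thesis
    using that[of 0] variance_moment_0 by simp
next
  case False
  then have "m \<ge> 1"
    by simp
  then show ?thesis
    by (rule that[OF abs_variance_moment_le])
qed

end

theorem mainTheorem10:
  fixes p :: "real \<Rightarrow> real" and m :: nat
  assumes p_meas: "p \<in> borel_measurable lborel"
    and p_nonneg: "\<And>x. 0 \<le> p x"
    and p_prob: "prob_space (entry_dist p)"
    and p_moments: "\<And>k::nat. integrable lborel (\<lambda>x. x ^ k * p x)"
    and p_mean: "(\<integral>x. x * p x \<partial>lborel) = 0"
    and p_var: "(\<integral>x. x\<^sup>2 * p x \<partial>lborel) = 1"
  shows "(\<lambda>N. expect_entries p N (\<lambda>b. (moment_AN m N b)\<^sup>2)
              - (expect_entries p N (moment_AN m N))\<^sup>2) \<in> O(\<lambda>N. 1 / real N)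
     \<and> ((\<lambda>N. expect_entries p N (\<lambda>b. (moment_AN m N b)\<^sup>2)
              - (expect_entries p N (moment_AN m N))\<^sup>2) \<longlonglongrightarrow> 0)"
proof -
  interpret centered_density p
    using p_meas p_nonneg p_prob p_moments p_mean by (rule centered_density.intro)
  define f where "f N = expect_entries p N (\<lambda>b. (moment_AN m N b)\<^sup>2)
    - (expect_entries p N (moment_AN m N))\<^sup>2" for N
  obtain C where C: "\<And>N. N \<ge> 1 \<Longrightarrow> \<bar>f N\<bar> \<le> C / N"
    using variance_moment_bound unfolding f_def by blast
  have bound: "eventually (\<lambda>N. norm (f N) \<le> C / real N) sequentially"
    using eventually_ge_at_top[of "1::nat"] by eventually_elim (simp add: C)
  then have "f \<in> O(\<lambda>N. 1 / real N)"
    by (intro bigoI[of _ C]) simp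
  moreover have "f \<longlonglongrightarrow> 0"
    using Lim_null_comparison[OF bound lim_const_over_n] .
  ultimately show ?thesis
    unfolding f_def by simp
qed

end
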